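(* Let $\tau = \frac{1+\sqrt{5}}{2}$. Then the infinite product $\prod_{n=1}^{\infty} \left(1 - \frac{1}{\tau^n}\right)^{\frac{\mu(n) - \varphi(n)}{n}}$ converges and $$e = \prod_{n=1}^{\infty} \left(1 - \frac{1}{\tau^n}\right)^{\frac{\mu(n) - \varphi(n)}{n}}.$$
   Context: $\tau=\frac{1+\sqrt5}{2}$ is the golden ratio. $\varphi(n)$ is Euler's totient function (the number of integers $1\le k\le n$ with $\gcd(k,n)=1$). $\mu(n)$ is the Möbius function: $\mu(1)=1$, $\mu(n)=0$ if $n$ is not squarefree, and $\mu(n)=(-1)^r$ if $n$ is squarefree with $r$ distinct prime factors. $e$ is the base of the natural logarithm. *)

theory Defs
  imports "HOL-Analysis.Analysis" "HOL-Number_Theory.Number_Theory"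
    "HOL-Computational_Algebra.Squarefree"
begin

definition moebius_mu :: "nat \<Rightarrow> int" where
  "moebius_mu n = (if n = 0 then 0
     else if squarefree n then (-1) ^ card (prime_factors n) else 0)"

definition golden_tau :: real where
  "golden_tau = (1 + sqrt 5) / 2"

end

theory Submission
  imports Defs
begin

(* Put x = 1/\<tau> and c(n) = \<phi>(n) - \<mu>(n).  Taking logarithms, the n-th
   factor of the product is exp(a n) with a n = (c n / n) * (-ln (1 - x^n)).
   Expanding -ln(1 - y) = \<Sum>_{m\<ge>1} y^m/m and collecting the terms with n*m = N
   turns \<Sum>_n a n into the Lambert-type series \<Sum>_N (x^N / N) * \<Sum>_{d|N} c d;
   all terms are nonnegative, so the rearrangement is legitimate.  Since
   \<Sum>_{d|N} \<phi> d = N and \<Sum>_{d|N} \<mu> d = [N = 1], the inner sum is N - [N = 1], and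
   the series equals \<Sum>_{N\<ge>1} x^N - x = x^2/(1 - x).  For x = 1/\<tau> we have
   x^2 = 1 - x, so \<Sum>_n a n = 1 and the product converges to exp 1. *)

text \<open>Multiplying by a prime that already divides e destroys squarefreeness.\<close>
lemma moebius_mu_mult_prime_dvd:
  assumes p: "prime (p::nat)" and "p dvd e" and "e > 0"
  shows "moebius_mu (p * e) = 0"
proof -
  have "p^2 dvd p * e" using assms by (auto simp: power2_eq_square)
  hence "\<not> squarefree (p * e)" using p by (intro not_squarefreeI) (auto simp: prime_gt_1_nat)
  thus ?thesis by (simp add: moebius_mu_def)
qed

text \<open>Multiplying by a new prime adds one prime factor and flips the sign.\<close>
lemma moebius_mu_mult_prime_not_dvd:
  assumes p: "prime (p::nat)" and "\<not> p dvd e" and "e > 0"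
  shows "moebius_mu (p * e) = - moebius_mu e"
proof -
  have cop: "coprime p e" using assms by (simp add: prime_imp_coprime)
  have sq: "squarefree (p * e) \<longleftrightarrow> squarefree e"
    using squarefree_mult_coprime[OF cop squarefree_prime[OF p]] squarefree_multD(2) by blast
  have pf: "prime_factors (p * e) = insert p (prime_factors e)"
    using assms by (simp add: prime_factors_product prime_prime_factors)
  have "p \<notin> prime_factors e" using assms by auto
  hence "card (prime_factors (p * e)) = Suc (card (prime_factors e))" by (simp add: pf)
  thus ?thesis using sq assms p by (simp add: moebius_mu_def prime_gt_0_nat)
qed

text \<open>For \<open>N = p M\<close> with p prime,
  the divisors divisible by p contribute \<open>\<mu>(p e) = -\<mu>(e)\<close> for the divisors e of M
  prime to p, which are exactly the divisors of N prime to p; the two halves cancel.\<close>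
lemma moebius_mu_divisor_sum:
  assumes "N > (0::nat)"
  shows "(\<Sum>d | d dvd N. moebius_mu d) = (if N = 1 then 1 else 0)"
proof (cases "N = 1")
  case True thus ?thesis by (simp add: moebius_mu_def)
next
  case False
  then obtain p where p: "prime p" "p dvd N" using assms prime_factor_nat by blast
  define M where "M = N div p"
  have N: "N = p * M" using p M_def by simp
  have M0: "M > 0" using assms N by (cases M) auto
  have fin: "finite {d. d dvd N}" using assms by simp
  have coprime_divisors: "{e. e dvd M \<and> \<not> p dvd e} = {d. d dvd N \<and> \<not> p dvd d}"
  proof safe
    fix d assume "d dvd N" "\<not> p dvd d"
    hence "coprime d p" using p by (metis coprime_commute prime_imp_coprime)
    thus "d dvd M" using \<open>d dvd N\<close> N by (metis coprime_dvd_mult_right_iff)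
  qed (auto simp: N)
  have multiples: "{d. d dvd N \<and> p dvd d} = (\<lambda>e. p * e) ` {e. e dvd M}"
  proof safe
    fix d assume "d dvd N" "p dvd d"
    then obtain e where "d = p * e" by (auto elim: dvdE)
    thus "d \<in> (\<lambda>e. p * e) ` {e. e dvd M}" using \<open>d dvd N\<close> p N by (auto simp: prime_gt_0_nat)
  qed (auto simp: N)
  have "(\<Sum>d | d dvd N. moebius_mu d)
      = (\<Sum>d | d dvd N \<and> \<not> p dvd d. moebius_mu d) + (\<Sum>d | d dvd N \<and> p dvd d. moebius_mu d)"
    by (subst sum.union_disjoint[symmetric]) (use fin in \<open>auto intro: sum.cong\<close>)
  also have "(\<Sum>d | d dvd N \<and> p dvd d. moebius_mu d) = (\<Sum>e | e dvd M. moebius_mu (p * e))"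
    unfolding multiples by (subst sum.reindex) (use p in \<open>auto simp: inj_on_def prime_gt_0_nat\<close>)
  also have "\<dots> = (\<Sum>e | e dvd M. if p dvd e then 0 else - moebius_mu e)"
    by (rule sum.cong)
       (use p M0 in \<open>auto simp: moebius_mu_mult_prime_dvd moebius_mu_mult_prime_not_dvd
                      dest: dvd_imp_le intro: Nat.gr0I\<close>)
  also have "\<dots> = - (\<Sum>e | e dvd M \<and> \<not> p dvd e. moebius_mu e)"
  proof -
    have "finite {e. e dvd M}" using M0 by simp
    moreover have "{e. e dvd M} \<inter> - {e. p dvd e} = {e. e dvd M \<and> \<not> p dvd e}" by auto
    ultimately show ?thesis by (simp add: sum.If_cases sum_negf)
  qed
  finally show ?thesis using False by (simp add: coprime_divisors)
qed

lemma moebius_mu_le_1: "moebius_mu n \<le> 1"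
  by (simp add: moebius_mu_def) (metis neg_one_even_power neg_one_odd_power order.refl
      zero_le_one le_minus_one_simps(1) order_trans)

lemma totient_minus_moebius_nonneg:
  assumes "n > 0"
  shows "real (totient n) - real_of_int (moebius_mu n) \<ge> 0"
proof -
  have "totient n \<ge> 1" using assms by (simp add: Suc_le_eq)
  thus ?thesis using moebius_mu_le_1[of n] by linarith
qed

text \<open>Combining Gauss's \<open>\<Sum>_{d|N} \<phi>(d) = N\<close> with the Moebius divisor sum.\<close>
lemma totient_minus_moebius_divisor_sum:
  assumes "N > 0"
  shows "(\<Sum>d | d dvd N. real (totient d) - real_of_int (moebius_mu d))
           = real N - (if N = 1 then 1 else 0)"
proof -
  have "(\<Sum>d | d dvd N. real (totient d)) = real N"
    unfolding of_nat_sum[symmetric] totient_divisor_sum ..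
  moreover have "(\<Sum>d | d dvd N. real_of_int (moebius_mu d)) = (if N = 1 then 1 else 0)"
    unfolding of_int_sum[symmetric] using moebius_mu_divisor_sum[OF assms] by simp
  ultimately show ?thesis by (simp add: sum_subtractf)
qed

lemma has_sum_pos_nat_shift:
  "((\<lambda>k. g (Suc k)) has_sum s) UNIV \<longleftrightarrow> (g has_sum (s::real)) {0<..}"
  by (rule has_sum_reindex_bij_witness[where i="\<lambda>n. n - 1" and j=Suc]) auto

lemma minus_ln_has_sum:
  fixes y :: real assumes "0 \<le> y" "y < 1"
  shows "((\<lambda>m::nat. y^m / real m) has_sum - ln (1 - y)) {0<..}"
proof -
  have "summable (\<lambda>n. y^Suc n)" using assms by (simp add: summable_geometric)
  hence summ: "summable (\<lambda>n. y^Suc n / real (Suc n))"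
    by (rule summable_comparison_test'[of _ 0]) (use assms in \<open>auto simp: field_simps\<close>)
  have term_eq: "(-1)^n * (1 / real (n + 1)) * (1 - y - 1)^Suc n = - (y^Suc n / real (Suc n))"
    for n
  proof -
    have "((-1::real)^n) * (-1)^Suc n = -1" by (induct n) auto
    moreover have "(-1)^n * (1 / real (n + 1)) * (1 - y - 1)^Suc n
        = ((-1)^n * (-1)^Suc n) * (y^Suc n / real (Suc n))"
      by (simp add: power_mult_distrib[symmetric] field_simps)
    ultimately show ?thesis by simp
  qed
  have "ln (1 - y) = (\<Sum>n. - (y^Suc n / real (Suc n)))"
    using ln_series[of "1 - y"] assms by (simp only: term_eq)
  also have "\<dots> = - (\<Sum>n. y^Suc n / real (Suc n))" by (rule suminf_minus[OF summ])
  finally have "(\<lambda>n. y^Suc n / real (Suc n)) sums - ln (1 - y)"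
    using summable_sums[OF summ] by simp
  hence "((\<lambda>n. y^Suc n / real (Suc n)) has_sum - ln (1 - y)) UNIV"
    by (rule sums_nonneg_imp_has_sum) (use assms in auto)
  thus ?thesis by (simp add: has_sum_pos_nat_shift[symmetric])
qed

lemma geometric_has_sum_pos:
  fixes x :: real assumes "0 \<le> x" "x < 1"
  shows "((\<lambda>N::nat. x^N) has_sum x / (1 - x)) {0<..}"
proof -
  have "(\<lambda>n. x * x^n) sums (x * (1 / (1 - x)))"
    by (rule sums_mult, rule geometric_sums) (use assms in auto)
  hence "((\<lambda>n. x^Suc n) has_sum x / (1 - x)) UNIV"
    by (intro sums_nonneg_imp_has_sum) (use assms in auto)
  thus ?thesis by (simp add: has_sum_pos_nat_shift[symmetric])
qed

lemma has_prod_exp_of_has_sum_pos: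
  fixes a :: "nat \<Rightarrow> real"
  assumes "(a has_sum s) {0<..}"
  shows "convergent_prod (\<lambda>k. exp (a (Suc k))) \<and> (\<lambda>k. exp (a (Suc k))) has_prod exp s"
proof -
  have "(\<lambda>k. a (Suc k)) sums s"
    using assms by (intro has_sum_imp_sums) (simp add: has_sum_pos_nat_shift)
  hence "raw_has_prod (\<lambda>k. exp (a (Suc k))) 0 (exp s)" by (rule sums_imp_has_prod_exp)
  thus ?thesis unfolding has_prod_def convergent_prod_def by blast
qed

text \<open>Rearrangement of a Lambert series with nonnegative coefficients:
  \<open>\<Sum>_n (c n/n) (-ln(1 - x^n)) = \<Sum>_{n,m} c n x^{nm}/(nm) = \<Sum>_N (x^N/N) \<Sum>_{d|N} c d\<close>.
  The double sum is indexed once by pairs (n, m) and once by pairs (N, d) with d | N;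
  nonnegativity makes both iterated sums valid.\<close>
lemma lambert_series_has_sum:
  fixes c :: "nat \<Rightarrow> real" and x :: real
  assumes c_nonneg: "\<And>n. n > 0 \<Longrightarrow> c n \<ge> 0" and x: "0 \<le> x" "x < 1"
    and divisor_series: "((\<lambda>N. x^N / real N * (\<Sum>d | d dvd N. c d)) has_sum S) {0<..}"
  shows "((\<lambda>n. c n / real n * - ln (1 - x^n)) has_sum S) {0<..}"
proof -
  define P where "P = ({0<..} :: nat set)"
  define D where "D = (\<lambda>N::nat. {d. d dvd N})"
  define F where "F = (\<lambda>(n, m). c n * x^(n * m) / real (n * m))"
  define G where "G = (\<lambda>(N, d). c d * x^N / real N)"
  have G_inner: "((\<lambda>d. G (N, d)) has_sum x^N / real N * (\<Sum>d | d dvd N. c d)) (D N)"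
    if "N \<in> P" for N
  proof -
    have "finite (D N)" using that by (simp add: D_def P_def)
    moreover have "(\<Sum>d\<in>D N. G (N, d)) = x^N / real N * (\<Sum>d | d dvd N. c d)"
      by (simp add: G_def D_def sum_distrib_left sum_divide_distrib mult.commute)
    ultimately show ?thesis using has_sum_finite[of "D N" "\<lambda>d. G (N, d)"] by simp
  qed
  have G_nonneg: "G (N, d) \<ge> 0" if "N \<in> P" "d \<in> D N" for N d
  proof -
    have "d > 0" using that by (auto simp: P_def D_def intro: Nat.gr0I)
    thus ?thesis using c_nonneg[of d] x by (simp add: G_def)
  qed
  have "G summable_on Sigma P D"
    using G_inner divisor_series G_nonneg unfolding P_def
    by (intro summable_on_SigmaI[where g="\<lambda>N. x^N / real N * (\<Sum>d | d dvd N. c d)"])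
       (auto simp: has_sum_imp_summable)
  hence "(G has_sum S) (Sigma P D)"
    using G_inner divisor_series unfolding P_def by (intro has_sum_SigmaI) auto
  hence F_sum: "(F has_sum S) (Sigma P (\<lambda>_. P))"
    by (subst has_sum_reindex_bij_witness[where i="\<lambda>(N, d). (d, N div d)"
          and j="\<lambda>(n, m). (n * m, n)" and T="Sigma P D" and h=G and s'=S])
       (auto simp: P_def D_def F_def G_def intro: Nat.gr0I)
  have F_inner: "((\<lambda>m. F (n, m)) has_sum c n / real n * - ln (1 - x^n)) P" if "n \<in> P" for n
  proof -
    have "((\<lambda>m::nat. (x^n)^m / real m) has_sum - ln (1 - x^n)) P"
      unfolding P_def using x that by (intro minus_ln_has_sum) (auto simp: P_def power_less_one_iff)
    hence "((\<lambda>m. c n / real n * ((x^n)^m / real m)) has_sum c n / real n * - ln (1 - x^n)) P"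
      by (rule has_sum_cmult_right)
    thus ?thesis by (simp add: F_def power_mult)
  qed
  show ?thesis using has_sum_SigmaD[OF F_sum F_inner] by (simp add: P_def)
qed

text \<open>For the coefficients \<open>\<phi> - \<mu>\<close> the Lambert series is \<open>\<Sum>_{N\<ge>1} x^N - x = x^2/(1 - x)\<close>.\<close>
lemma lambert_series_totient_minus_moebius:
  fixes x :: real assumes x: "0 \<le> x" "x < 1"
  shows "((\<lambda>n. (real (totient n) - real_of_int (moebius_mu n)) / real n * - ln (1 - x^n))
           has_sum x^2 / (1 - x)) {0<..}"
proof (rule lambert_series_has_sum[OF totient_minus_moebius_nonneg x])
  have geom: "((\<lambda>N::nat. x^N) has_sum x / (1 - x)) {0<..}"
    by (rule geometric_has_sum_pos[OF x])
  have first: "((\<lambda>N::nat. if N = 1 then x else 0) has_sum x) {0<..}"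
    by (rule has_sum_finite_neutralI[of "{1}"]) auto
  have "((\<lambda>N::nat. x^N + - (if N = 1 then x else 0)) has_sum x / (1 - x) + - x) {0<..}"
    by (intro has_sum_add geom has_sum_uminusI first)
  moreover have "x / (1 - x) + - x = x^2 / (1 - x)"
    using x by (simp add: field_simps power2_eq_square)
  ultimately have "((\<lambda>N::nat. x^N + - (if N = 1 then x else 0)) has_sum x^2 / (1 - x)) {0<..}"
    by simp
  moreover have "x^N + - (if N = 1 then x else 0)
      = x^N / real N * (\<Sum>d | d dvd N. real (totient d) - real_of_int (moebius_mu d))"
    if "N \<in> {0<..}" for N
    using that by (simp add: totient_minus_moebius_divisor_sum field_simps)
  ultimately show "((\<lambda>N. x^N / real N *
      (\<Sum>d | d dvd N. real (totient d) - real_of_int (moebius_mu d))) has_sum x^2 / (1 - x)) {0<..}"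
    by (subst has_sum_cong[symmetric]) auto
qed

text \<open>\<open>x = 1/\<tau>\<close> lies in (0, 1) and satisfies \<open>x^2 = 1 - x\<close> (divide \<open>\<tau>^2 = \<tau> + 1\<close> by \<open>\<tau>^2\<close>).\<close>
lemma inverse_golden_tau:
  shows "0 < 1 / golden_tau" and "1 / golden_tau < 1"
    and "(1 / golden_tau)^2 = 1 - 1 / golden_tau"
proof -
  have "sqrt 5 > 1" by (simp add: real_less_rsqrt)
  hence gt1: "golden_tau > 1" by (simp add: golden_tau_def)
  thus "0 < 1 / golden_tau" "1 / golden_tau < 1" by auto
  have "golden_tau^2 = golden_tau + 1"
    by (simp add: golden_tau_def power2_eq_square field_simps)
  thus "(1 / golden_tau)^2 = 1 - 1 / golden_tau"
    using gt1 by (simp add: field_simps power2_eq_square)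
qed

theorem mainTheorem1:
  defines "f \<equiv> (\<lambda>k::nat. let n = Suc k in
     (1 - 1 / golden_tau ^ n) powr ((real_of_int (moebius_mu n) - real (totient n)) / real n))"
  shows "convergent_prod f \<and> f has_prod exp 1"
proof -
  define x where "x = 1 / golden_tau"
  define a where "a n = (real (totient n) - real_of_int (moebius_mu n)) / real n * - ln (1 - x^n)"
    for n
  have "(a has_sum x^2 / (1 - x)) {0<..}"
    unfolding a_def x_def using inverse_golden_tau
    by (intro lambert_series_totient_minus_moebius) auto
  moreover have "x^2 / (1 - x) = 1"
    using inverse_golden_tau by (simp add: x_def)
  ultimately have a_sum: "(a has_sum 1) {0<..}" by simp
  have "f = (\<lambda>k. exp (a (Suc k)))"
  proof
    fix k
    let ?e = "(real_of_int (moebius_mu (Suc k)) - real (totient (Suc k))) / real (Suc k)"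
    have "x ^ Suc k < 1"
      using inverse_golden_tau(1,2) unfolding x_def by (intro power_less_one_iff[THEN iffD2]) auto
    have "f k = (1 - x ^ Suc k) powr ?e"
      by (simp add: f_def x_def power_one_over)
    also have "\<dots> = exp (?e * ln (1 - x ^ Suc k))"
      using \<open>x ^ Suc k < 1\<close> by (simp add: powr_def)
    also have "\<dots> = exp (a (Suc k))"
      unfolding a_def by (simp add: field_simps)
    finally show "f k = exp (a (Suc k))" .
  qed
  thus ?thesis using has_prod_exp_of_has_sum_pos[OF a_sum] by simp
qed

end
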